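(* The proof system ${\bf K^\boxplus}$ is sound and strongly complete with respect to the class of all bimodal frames: for every set $\Gamma\subseteq\mathcal{L}(\boxplus)$ and $\phi\in\mathcal{L}(\boxplus)$, $\Gamma\vdash_{{\bf K^\boxplus}}\phi$ iff $\phi$ is true at every state of every bimodal model at which all formulas of $\Gamma$ are true.
   Context: Fix a nonempty set $\mathbf{P}$ of propositional variables. A bimodal model is $\langle S,R_1,R_2,V\rangle$ with $S$ nonempty, $R_1,R_2\subseteq S\times S$, $V:\mathbf{P}\to\mathcal{P}(S)$. Write $R_i(s)=\{t\mid sR_it\}$. $\mathcal{L}(\boxplus):\ \phi::=p\mid\neg\phi\mid(\phi\wedge\phi)\mid\boxplus\phi$ (other connectives, $\top,\bot$ abbreviations). Truth: $\mathcal{M},s\vDash\boxplus\phi$ iff ($\mathcal{M},t\vDash\phi$ for all $t\in R_1(s)$) or ($\mathcal{M},u\vDash\neg\phi$ for all $u\in R_2(s)$); atoms and Booleans as usual. ${\bf K^\boxplus}$ has axioms: all instances of propositional tautologies; CON: $\boxplus\phi\wedge\boxplus\psi\to\boxplus(\phi\wedge\psi)\wedge\boxplus(\phi\vee\psi)$; DIS: $\boxplus\phi\to\boxplus(\phi\vee\psi)\vee\boxplus(\phi\wedge\chi)$; and rules: modus ponens; RN: from $\phi$ infer $\boxplus\phi\wedge\boxplus\neg\phi$; RE: from $\phi\leftrightarrow\psi$ infer $\boxplus\phi\leftrightarrow\boxplus\psi$. $\Gamma\vdash\phi$ means there are finitely many $\gamma_1,\dots,\gamma_n\in\Gamma$ with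 $\gamma_1\wedge\dots\wedge\gamma_n\to\phi$ a theorem. *)

theory Defs
  imports Main
begin

datatype 'p fm = Atom 'p | Neg "'p fm" | Conj "'p fm" "'p fm" | Box "'p fm"

definition Disj :: "'p fm \<Rightarrow> 'p fm \<Rightarrow> 'p fm" where
  "Disj a b = Neg (Conj (Neg a) (Neg b))"
definition Imp :: "'p fm \<Rightarrow> 'p fm \<Rightarrow> 'p fm" where
  "Imp a b = Neg (Conj a (Neg b))"
definition Iff :: "'p fm \<Rightarrow> 'p fm \<Rightarrow> 'p fm" where
  "Iff a b = Conj (Imp a b) (Imp b a)"

record 's model =
  St :: "'s set"
  R1 :: "('s \<times> 's) set"
  R2 :: "('s \<times> 's) set"

definition is_model :: "'s model \<Rightarrow> ('p \<Rightarrow> 's set) \<Rightarrow> bool" where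
  "is_model M V \<longleftrightarrow> St M \<noteq> {} \<and> R1 M \<subseteq> St M \<times> St M \<and> R2 M \<subseteq> St M \<times> St M
     \<and> (\<forall>p. V p \<subseteq> St M)"

fun sat :: "'s model \<Rightarrow> ('p \<Rightarrow> 's set) \<Rightarrow> 's \<Rightarrow> 'p fm \<Rightarrow> bool" where
  "sat M V s (Atom p) = (s \<in> V p)"
| "sat M V s (Neg a) = (\<not> sat M V s a)"
| "sat M V s (Conj a b) = (sat M V s a \<and> sat M V s b)"
| "sat M V s (Box a) =
     ((\<forall>t. (s, t) \<in> R1 M \<longrightarrow> sat M V t a) \<or> (\<forall>u. (s, u) \<in> R2 M \<longrightarrow> \<not> sat M V u a))"

definition conseq :: "'s itself \<Rightarrow> 'p fm set \<Rightarrow> 'p fm \<Rightarrow> bool" where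
  "conseq _ \<Gamma> \<phi> \<longleftrightarrow> (\<forall>(M :: 's model) V s. is_model M V \<longrightarrow> s \<in> St M \<longrightarrow>
      (\<forall>\<gamma>\<in>\<Gamma>. sat M V s \<gamma>) \<longrightarrow> sat M V s \<phi>)"

text \<open>Propositional tautologies: formulas true under every Boolean valuation of their
  atoms and boxed subformulas (boxed formulas treated as propositional letters).\<close>
fun pval :: "('p fm \<Rightarrow> bool) \<Rightarrow> 'p fm \<Rightarrow> bool" where
  "pval v (Atom p) = v (Atom p)"
| "pval v (Neg a) = (\<not> pval v a)"
| "pval v (Conj a b) = (pval v a \<and> pval v b)"
| "pval v (Box a) = v (Box a)"

definition tautology :: "'p fm \<Rightarrow> bool" where
  "tautology \<phi> \<longleftrightarrow> (\<forall>v. pval v \<phi>)"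

inductive thm_K :: "'p fm \<Rightarrow> bool" where
  Taut: "tautology \<phi> \<Longrightarrow> thm_K \<phi>"
| CON: "thm_K (Imp (Conj (Box \<phi>) (Box \<psi>)) (Conj (Box (Conj \<phi> \<psi>)) (Box (Disj \<phi> \<psi>))))"
| DIS: "thm_K (Imp (Box \<phi>) (Disj (Box (Disj \<phi> \<psi>)) (Box (Conj \<phi> \<chi>))))"
| MP: "thm_K (Imp \<phi> \<psi>) \<Longrightarrow> thm_K \<phi> \<Longrightarrow> thm_K \<psi>"
| RN: "thm_K \<phi> \<Longrightarrow> thm_K (Conj (Box \<phi>) (Box (Neg \<phi>)))"
| RE: "thm_K (Iff \<phi> \<psi>) \<Longrightarrow> thm_K (Iff (Box \<phi>) (Box \<psi>))"

definition Top :: "'p fm" where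
  "Top = Neg (Conj (Atom undefined) (Neg (Atom undefined)))"

fun conjs :: "'p fm list \<Rightarrow> 'p fm" where
  "conjs [] = Top"
| "conjs [g] = g"
| "conjs (g # gs) = Conj g (conjs gs)"

definition derives :: "'p fm set \<Rightarrow> 'p fm \<Rightarrow> bool" where
  "derives \<Gamma> \<phi> \<longleftrightarrow> (\<exists>gs. set gs \<subseteq> \<Gamma> \<and> thm_K (Imp (conjs gs) \<phi>))"

end

theory Submission
  imports Defs
begin

text \<open>For completeness, build the canonical model
  on maximal consistent sets. Since Box is not normal, the accessibility relations cannot be read off
  from the boxed formulas directly; instead each world s carries the filter
  F(s) = {\<phi>. Box \<psi> \<in> s for every provable consequence \<psi> of \<phi>} and the ideal
  I(s) = {\<phi>. Box \<psi> \<in> s for every \<psi> provably implying \<phi>}. A world t is R1-accessible from s when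
  F(s) \<subseteq> t, and R2-accessible when t is disjoint from I(s). RN and CON make F(s) a proper filter and
  I(s) a proper ideal of the Lindenbaum algebra, so by Lindenbaum's lemma a formula outside F(s)
  fails at some R1-successor and a formula outside I(s) holds at some R2-successor; DIS yields
  Box \<phi> \<in> s exactly when \<phi> \<in> F(s) \<union> I(s). Together these give the truth lemma for Box.\<close>

lemma pval_connectives [simp]:
  "pval v (Imp a b) = (pval v a \<longrightarrow> pval v b)"
  "pval v (Disj a b) = (pval v a \<or> pval v b)"
  "pval v (Iff a b) = (pval v a \<longleftrightarrow> pval v b)"
  "pval v Top"
  by (auto simp: Imp_def Disj_def Iff_def Top_def)

lemma pval_conjs [simp]: "pval v (conjs gs) = (\<forall>g\<in>set gs. pval v g)"
  by (induction gs rule: conjs.induct) auto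

lemma sat_connectives [simp]:
  "sat M V s (Imp a b) = (sat M V s a \<longrightarrow> sat M V s b)"
  "sat M V s (Disj a b) = (sat M V s a \<or> sat M V s b)"
  "sat M V s (Iff a b) = (sat M V s a \<longleftrightarrow> sat M V s b)"
  "sat M V s Top"
  by (auto simp: Imp_def Disj_def Iff_def Top_def)

lemma sat_conjs [simp]: "sat M V s (conjs gs) = (\<forall>g\<in>set gs. sat M V s g)"
  by (induction gs rule: conjs.induct) auto

lemma pval_sat: "pval (sat M V s) \<phi> = sat M V s \<phi>"
  by (induction \<phi>) auto

lemma thm_K_valid: "thm_K \<phi> \<Longrightarrow> sat M V s \<phi>"
proof (induction arbitrary: s rule: thm_K.induct)
  case (Taut \<phi>)
  then show ?case
    unfolding tautology_def by (metis pval_sat)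
qed auto

theorem soundness:
  assumes "derives \<Gamma> \<phi>" shows "conseq TYPE('s) \<Gamma> \<phi>"
proof -
  obtain gs where gs: "set gs \<subseteq> \<Gamma>" "thm_K (Imp (conjs gs) \<phi>)"
    using assms by (auto simp: derives_def)
  show ?thesis
    unfolding conseq_def
  proof (intro allI impI)
    fix M :: "'s model" and V s
    assume "\<forall>\<gamma>\<in>\<Gamma>. sat M V s \<gamma>"
    then show "sat M V s \<phi>"
      using gs thm_K_valid[of "Imp (conjs gs) \<phi>" M V s] by auto
  qed
qed

lemma thm_K_taut: "(\<And>v. pval v b) \<Longrightarrow> thm_K b"
  by (auto simp: tautology_def intro!: Taut)

lemma thm_K_taut_mp: "thm_K a \<Longrightarrow> (\<And>v. pval v a \<Longrightarrow> pval v b) \<Longrightarrow> thm_K b"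
  by (rule MP[of a b]) (auto intro!: thm_K_taut)

lemma thm_K_taut_mp2:
  assumes "thm_K a" "thm_K b" "\<And>v. pval v a \<Longrightarrow> pval v b \<Longrightarrow> pval v c"
  shows "thm_K c"
proof -
  have "thm_K (Imp b (Conj a b))"
    using thm_K_taut_mp[OF assms(1)] by auto
  then have "thm_K (Conj a b)"
    using assms(2) MP by blast
  then show ?thesis
    by (rule thm_K_taut_mp) (use assms(3) in auto)
qed

lemma thm_K_Imp_refl: "thm_K (Imp a a)"
  by (rule thm_K_taut) simp

definition consistent :: "'p fm set \<Rightarrow> bool" where
  "consistent D \<longleftrightarrow> (\<forall>gs. set gs \<subseteq> D \<longrightarrow> \<not> thm_K (Neg (conjs gs)))"

definition max_consistent :: "'p fm set \<Rightarrow> bool" where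
  "max_consistent M \<longleftrightarrow> consistent M \<and> (\<forall>\<phi>. consistent (insert \<phi> M) \<longrightarrow> \<phi> \<in> M)"

lemma consistent_insert_Neg: "\<not> derives D \<phi> \<Longrightarrow> consistent (insert (Neg \<phi>) D)"
  unfolding consistent_def
proof (intro allI impI notI)
  fix gs assume nd: "\<not> derives D \<phi>"
    and gs: "set gs \<subseteq> insert (Neg \<phi>) D" "thm_K (Neg (conjs gs))"
  have "thm_K (Imp (conjs (removeAll (Neg \<phi>) gs)) \<phi>)"
    by (rule thm_K_taut_mp[OF gs(2)]) auto
  moreover have "set (removeAll (Neg \<phi>) gs) \<subseteq> D"
    using gs(1) by auto
  ultimately show False
    using nd by (auto simp: derives_def)
qed

lemma lindenbaum:
  assumes "consistent D" shows "\<exists>M. D \<subseteq> M \<and> max_consistent M"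
proof -
  let ?A = "{X. D \<subseteq> X \<and> consistent X}"
  have "\<exists>M\<in>?A. \<forall>X\<in>?A. M \<subseteq> X \<longrightarrow> X = M"
  proof (rule subset_Zorn_nonempty)
    show "?A \<noteq> {}"
      using assms by blast
  next
    fix C assume C: "C \<noteq> {}" "subset.chain ?A C"
    have "consistent (\<Union>C)"
      unfolding consistent_def
    proof (intro allI impI)
      fix gs assume gs: "set gs \<subseteq> \<Union>C"
      obtain B where "B \<in> C" "set gs \<subseteq> B"
        using finite_subset_Union_chain[OF _ gs C] by auto
      then show "\<not> thm_K (Neg (conjs gs))"
        using C(2) by (auto simp: subset.chain_def consistent_def)
    qed
    then show "\<Union>C \<in> ?A"
      using C unfolding subset.chain_def by blast
  qed
  then obtain M where M: "M \<in> ?A" "\<forall>X\<in>?A. M \<subseteq> X \<longrightarrow> X = M"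
    by blast
  then have "max_consistent M"
    unfolding max_consistent_def by blast
  then show ?thesis
    using M by auto
qed

lemma max_consistent_propositionally_satisfiable:
  assumes "max_consistent M" "set gs \<subseteq> M" shows "\<exists>v. \<forall>g\<in>set gs. pval v g"
proof (rule ccontr)
  assume "\<nexists>v. \<forall>g\<in>set gs. pval v g"
  then have "thm_K (Neg (conjs gs))"
    by (intro thm_K_taut) auto
  then show False
    using assms by (auto simp: max_consistent_def consistent_def)
qed

lemma max_consistent_mem_or_Neg_mem:
  assumes M: "max_consistent M" shows "\<phi> \<in> M \<or> Neg \<phi> \<in> M"
proof (rule ccontr)
  assume "\<not> (\<phi> \<in> M \<or> Neg \<phi> \<in> M)"
  then have "\<not> consistent (insert \<phi> M)" "\<not> consistent (insert (Neg \<phi>) M)"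
    using M by (auto simp: max_consistent_def)
  then obtain gs hs where gs: "set gs \<subseteq> insert \<phi> M" "thm_K (Neg (conjs gs))"
    and hs: "set hs \<subseteq> insert (Neg \<phi>) M" "thm_K (Neg (conjs hs))"
    by (auto simp: consistent_def)
  let ?l = "removeAll \<phi> gs @ removeAll (Neg \<phi>) hs"
  have "thm_K (Neg (conjs ?l))"
  proof (rule thm_K_taut_mp2[OF gs(2) hs(2)])
    fix v assume "pval v (Neg (conjs gs))" "pval v (Neg (conjs hs))"
    then obtain g h where "g \<in> set gs" "\<not> pval v g" "h \<in> set hs" "\<not> pval v h"
      by auto
    then show "pval v (Neg (conjs ?l))"
      by (cases "pval v \<phi>") force+
  qed
  moreover have "set ?l \<subseteq> M"
    using gs hs by auto
  ultimately show False
    using M by (auto simp: max_consistent_def consistent_def)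
qed

lemma max_consistent_derives_mem:
  assumes M: "max_consistent M" and "set gs \<subseteq> M" "thm_K (Imp (conjs gs) b)"
  shows "b \<in> M"
proof (rule ccontr)
  assume "b \<notin> M"
  then have "Neg b \<in> M"
    using max_consistent_mem_or_Neg_mem M by blast
  moreover have "thm_K (Neg (conjs (gs @ [Neg b])))"
    by (rule thm_K_taut_mp[OF assms(3)]) auto
  ultimately show False
    using assms by (auto simp: max_consistent_def consistent_def)
qed

lemma max_consistent_thm_K: "max_consistent M \<Longrightarrow> thm_K b \<Longrightarrow> b \<in> M"
  using max_consistent_derives_mem[of M "[]" b] thm_K_taut_mp by fastforce

lemma max_consistent_Neg:
  assumes M: "max_consistent M" shows "Neg a \<in> M \<longleftrightarrow> a \<notin> M"
proof
  assume "Neg a \<in> M"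
  then show "a \<notin> M"
    using max_consistent_propositionally_satisfiable[OF M, of "[a, Neg a]"] by auto
qed (use max_consistent_mem_or_Neg_mem[OF M] in blast)

lemma max_consistent_Conj:
  assumes M: "max_consistent M" shows "Conj a b \<in> M \<longleftrightarrow> a \<in> M \<and> b \<in> M"
proof
  assume "Conj a b \<in> M"
  then show "a \<in> M \<and> b \<in> M"
    using max_consistent_derives_mem[OF M, of "[Conj a b]" a]
      max_consistent_derives_mem[OF M, of "[Conj a b]" b] thm_K_taut[of "Imp (Conj a b) a"] thm_K_taut[of "Imp (Conj a b) b"] by simp
next
  assume "a \<in> M \<and> b \<in> M"
  then show "Conj a b \<in> M"
    using max_consistent_derives_mem[OF M, of "[a, b]" "Conj a b"] thm_K_Imp_refl[of "Conj a b"] by simp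
qed

lemma max_consistent_Imp: "max_consistent M \<Longrightarrow> Imp a b \<in> M \<longleftrightarrow> (a \<in> M \<longrightarrow> b \<in> M)"
  by (auto simp: Imp_def max_consistent_Neg max_consistent_Conj)

lemma max_consistent_Disj: "max_consistent M \<Longrightarrow> Disj a b \<in> M \<longleftrightarrow> a \<in> M \<or> b \<in> M"
  by (auto simp: Disj_def max_consistent_Neg max_consistent_Conj)

lemma max_consistent_Iff: "max_consistent M \<Longrightarrow> Iff a b \<in> M \<longleftrightarrow> (a \<in> M \<longleftrightarrow> b \<in> M)"
  by (auto simp: Iff_def max_consistent_Imp max_consistent_Conj)

lemma max_consistent_Box_cong:
  "max_consistent s \<Longrightarrow> thm_K (Iff a b) \<Longrightarrow> Box a \<in> s \<Longrightarrow> Box b \<in> s"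
  using RE[of a b] max_consistent_thm_K[of s "Iff (Box a) (Box b)"] max_consistent_Iff by blast

lemma max_consistent_Box_Top_Bot: "max_consistent s \<Longrightarrow> Box Top \<in> s \<and> Box (Neg Top) \<in> s"
  using max_consistent_thm_K[OF _ RN[OF thm_K_taut[of Top]]] max_consistent_Conj by auto

definition box_filter :: "'p fm set \<Rightarrow> 'p fm set" where
  "box_filter s = {\<phi>. \<forall>\<psi>. thm_K (Imp \<phi> \<psi>) \<longrightarrow> Box \<psi> \<in> s}"

definition box_ideal :: "'p fm set \<Rightarrow> 'p fm set" where
  "box_ideal s = {\<phi>. \<forall>\<psi>. thm_K (Imp \<psi> \<phi>) \<longrightarrow> Box \<psi> \<in> s}"

lemma Box_mem_if_box_filter: "\<phi> \<in> box_filter s \<Longrightarrow> Box \<phi> \<in> s"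
  using thm_K_Imp_refl by (auto simp: box_filter_def)

lemma Box_mem_if_box_ideal: "\<phi> \<in> box_ideal s \<Longrightarrow> Box \<phi> \<in> s"
  using thm_K_Imp_refl by (auto simp: box_ideal_def)

lemma Box_mem_imp_box_filter_or_ideal:
  assumes s: "max_consistent s" and "Box \<phi> \<in> s"
  shows "\<phi> \<in> box_filter s \<or> \<phi> \<in> box_ideal s"
proof (rule ccontr)
  assume "\<not> (\<phi> \<in> box_filter s \<or> \<phi> \<in> box_ideal s)"
  then obtain \<psi> \<chi> where \<psi>: "thm_K (Imp \<phi> \<psi>)" "Box \<psi> \<notin> s"
    and \<chi>: "thm_K (Imp \<chi> \<phi>)" "Box \<chi> \<notin> s"
    by (auto simp: box_filter_def box_ideal_def)
  have "Box (Disj \<phi> \<psi>) \<in> s \<or> Box (Conj \<phi> \<chi>) \<in> s"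
    using max_consistent_thm_K[OF s DIS] assms max_consistent_Imp max_consistent_Disj by blast
  moreover have "thm_K (Iff (Disj \<phi> \<psi>) \<psi>)"
    by (rule thm_K_taut_mp[OF \<psi>(1)]) auto
  moreover have "thm_K (Iff (Conj \<phi> \<chi>) \<chi>)"
    by (rule thm_K_taut_mp[OF \<chi>(1)]) auto
  ultimately show False
    using max_consistent_Box_cong[OF s] \<psi>(2) \<chi>(2) by blast
qed

lemma Box_mem_iff:
  "max_consistent s \<Longrightarrow> Box \<phi> \<in> s \<longleftrightarrow> \<phi> \<in> box_filter s \<or> \<phi> \<in> box_ideal s"
  using Box_mem_imp_box_filter_or_ideal Box_mem_if_box_filter Box_mem_if_box_ideal by blast

lemma box_filter_mono: "a \<in> box_filter s \<Longrightarrow> thm_K (Imp a b) \<Longrightarrow> b \<in> box_filter s"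
  unfolding box_filter_def
proof (clarify)
  fix \<psi> assume "\<forall>\<psi>. thm_K (Imp a \<psi>) \<longrightarrow> Box \<psi> \<in> s" "thm_K (Imp a b)" "thm_K (Imp b \<psi>)"
  then show "Box \<psi> \<in> s"
    using thm_K_taut_mp2[of "Imp a b" "Imp b \<psi>" "Imp a \<psi>"] by simp
qed

lemma box_ideal_antimono: "a \<in> box_ideal s \<Longrightarrow> thm_K (Imp b a) \<Longrightarrow> b \<in> box_ideal s"
  unfolding box_ideal_def
proof (clarify)
  fix \<psi> assume "\<forall>\<psi>. thm_K (Imp \<psi> a) \<longrightarrow> Box \<psi> \<in> s" "thm_K (Imp b a)" "thm_K (Imp \<psi> b)"
  then show "Box \<psi> \<in> s"
    using thm_K_taut_mp2[of "Imp b a" "Imp \<psi> b" "Imp \<psi> a"] by simp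
qed

lemma Top_in_box_filter:
  fixes s :: "'p fm set" assumes s: "max_consistent s" shows "Top \<in> box_filter s"
  unfolding box_filter_def
proof (clarify)
  fix \<psi> :: "'p fm" assume "thm_K (Imp Top \<psi>)"
  then have "thm_K (Iff Top \<psi>)"
    by (rule thm_K_taut_mp) auto
  then show "Box \<psi> \<in> s"
    using max_consistent_Box_cong[OF s] max_consistent_Box_Top_Bot[OF s] by blast
qed

lemma Bot_in_box_ideal:
  fixes s :: "'p fm set" assumes s: "max_consistent s" shows "Neg Top \<in> box_ideal s"
  unfolding box_ideal_def
proof (clarify)
  fix \<psi> :: "'p fm" assume "thm_K (Imp \<psi> (Neg Top))"
  then have "thm_K (Iff (Neg Top) \<psi>)"
    by (rule thm_K_taut_mp) auto
  then show "Box \<psi> \<in> s"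
    using max_consistent_Box_cong[OF s] max_consistent_Box_Top_Bot[OF s] by blast
qed

text \<open>For \<chi> with \<turnstile> a \<and> b \<rightarrow> \<chi>, apply CON to \<chi> \<or> a and \<chi> \<or> b, whose conjunction is equivalent
  to \<chi>; dually for the ideal.\<close>

lemma box_filter_Conj:
  assumes s: "max_consistent s" and a: "a \<in> box_filter s" and b: "b \<in> box_filter s"
  shows "Conj a b \<in> box_filter s"
  unfolding box_filter_def
proof (clarify)
  fix \<chi> assume \<chi>: "thm_K (Imp (Conj a b) \<chi>)"
  have "Box (Disj \<chi> a) \<in> s" "Box (Disj \<chi> b) \<in> s"
    using a b thm_K_taut[of "Imp a (Disj \<chi> a)"] thm_K_taut[of "Imp b (Disj \<chi> b)"]
    by (auto simp: box_filter_def)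
  then have "Box (Conj (Disj \<chi> a) (Disj \<chi> b)) \<in> s"
    using max_consistent_thm_K[OF s CON] max_consistent_Imp[OF s] max_consistent_Conj[OF s] by blast
  moreover have "thm_K (Iff (Conj (Disj \<chi> a) (Disj \<chi> b)) \<chi>)"
    by (rule thm_K_taut_mp[OF \<chi>]) auto
  ultimately show "Box \<chi> \<in> s"
    using max_consistent_Box_cong[OF s] by blast
qed

lemma box_ideal_Disj:
  assumes s: "max_consistent s" and a: "a \<in> box_ideal s" and b: "b \<in> box_ideal s"
  shows "Disj a b \<in> box_ideal s"
  unfolding box_ideal_def
proof (clarify)
  fix \<chi> assume \<chi>: "thm_K (Imp \<chi> (Disj a b))"
  have "Box (Conj \<chi> a) \<in> s" "Box (Conj \<chi> b) \<in> s"
    using a b thm_K_taut[of "Imp (Conj \<chi> a) a"] thm_K_taut[of "Imp (Conj \<chi> b) b"]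
    by (auto simp: box_ideal_def)
  then have "Box (Disj (Conj \<chi> a) (Conj \<chi> b)) \<in> s"
    using max_consistent_thm_K[OF s CON] max_consistent_Imp[OF s] max_consistent_Conj[OF s] by blast
  moreover have "thm_K (Iff (Disj (Conj \<chi> a) (Conj \<chi> b)) \<chi>)"
    by (rule thm_K_taut_mp[OF \<chi>]) auto
  ultimately show "Box \<chi> \<in> s"
    using max_consistent_Box_cong[OF s] by blast
qed

lemma box_filter_conjs: "max_consistent s \<Longrightarrow> set gs \<subseteq> box_filter s \<Longrightarrow> conjs gs \<in> box_filter s"
  by (induction gs rule: conjs.induct) (auto simp: Top_in_box_filter box_filter_Conj)

fun disjs :: "'p fm list \<Rightarrow> 'p fm" where
  "disjs [] = Neg Top"
| "disjs (x # xs) = Disj x (disjs xs)"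

lemma pval_disjs [simp]: "pval v (disjs xs) = (\<exists>x\<in>set xs. pval v x)"
  by (induction xs) auto

lemma box_ideal_disjs: "max_consistent s \<Longrightarrow> set xs \<subseteq> box_ideal s \<Longrightarrow> disjs xs \<in> box_ideal s"
  by (induction xs) (auto simp: Bot_in_box_ideal box_ideal_Disj)

lemma not_in_box_filter_separated:
  assumes s: "max_consistent s" and \<phi>: "\<phi> \<notin> box_filter s"
  shows "\<exists>t. max_consistent t \<and> box_filter s \<subseteq> t \<and> \<phi> \<notin> t"
proof -
  have "\<not> derives (box_filter s) \<phi>"
  proof
    assume "derives (box_filter s) \<phi>"
    then obtain gs where gs: "set gs \<subseteq> box_filter s" "thm_K (Imp (conjs gs) \<phi>)"
      by (auto simp: derives_def)
    then have "\<phi> \<in> box_filter s"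
      using box_filter_mono[OF box_filter_conjs[OF s gs(1)]] by simp
    then show False
      using \<phi> by contradiction
  qed
  then obtain t where t: "insert (Neg \<phi>) (box_filter s) \<subseteq> t" "max_consistent t"
    using lindenbaum[OF consistent_insert_Neg] by blast
  then have "\<phi> \<notin> t"
    using max_consistent_Neg[OF t(2), of \<phi>] by simp
  then show ?thesis
    using t by auto
qed

lemma not_in_box_ideal_separated:
  assumes s: "max_consistent s" and \<phi>: "\<phi> \<notin> box_ideal s"
  shows "\<exists>u. max_consistent u \<and> box_ideal s \<inter> u = {} \<and> \<phi> \<in> u"
proof -
  have "consistent (insert \<phi> (Neg ` box_ideal s))"
    unfolding consistent_def
  proof (intro allI impI notI)
    fix gs assume gs: "set gs \<subseteq> insert \<phi> (Neg ` box_ideal s)" "thm_K (Neg (conjs gs))"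
    have "removeAll \<phi> gs \<in> lists (Neg ` box_ideal s)"
      using gs(1) by auto
    then obtain xs where xs: "removeAll \<phi> gs = map Neg xs" "set xs \<subseteq> box_ideal s"
      by (auto simp: lists_image)
    have "thm_K (Imp \<phi> (disjs xs))"
    proof (rule thm_K_taut_mp[OF gs(2)])
      fix v assume "pval v (Neg (conjs gs))"
      then obtain g where g: "g \<in> set gs" "\<not> pval v g"
        by auto
      have "g \<in> set (map Neg xs)" if "pval v \<phi>"
      proof -
        have "g \<in> set (removeAll \<phi> gs)"
          using g that by auto
        then show ?thesis
          by (simp only: xs(1))
      qed
      then show "pval v (Imp \<phi> (disjs xs))"
        using g(2) by force
    qed
    then have "\<phi> \<in> box_ideal s"
      by (rule box_ideal_antimono[OF box_ideal_disjs[OF s xs(2)]])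
    then show False
      using \<phi> by contradiction
  qed
  then obtain u where u: "insert \<phi> (Neg ` box_ideal s) \<subseteq> u" "max_consistent u"
    using lindenbaum by blast
  then have "box_ideal s \<inter> u = {}"
    using max_consistent_Neg[OF u(2)] by auto
  then show ?thesis
    using u by auto
qed

definition canonical_model :: "'p fm set model" where
  "canonical_model =
     \<lparr>St = {M. max_consistent M},
      R1 = {(s, t). max_consistent s \<and> max_consistent t \<and> box_filter s \<subseteq> t},
      R2 = {(s, u). max_consistent s \<and> max_consistent u \<and> box_ideal s \<inter> u = {}}\<rparr>"

definition canonical_val :: "'p \<Rightarrow> 'p fm set set" where
  "canonical_val p = {M. max_consistent M \<and> Atom p \<in> M}"

lemma is_model_canonical:
  fixes s :: "'p fm set"
  assumes "max_consistent s" shows "is_model canonical_model (canonical_val :: 'p \<Rightarrow> _)"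
  using assms unfolding is_model_def canonical_model_def canonical_val_def by auto

lemma truth_lemma:
  "max_consistent s \<Longrightarrow> sat canonical_model canonical_val s \<phi> \<longleftrightarrow> \<phi> \<in> s"
proof (induction \<phi> arbitrary: s)
  case (Atom p)
  then show ?case
    by (simp add: canonical_val_def)
next
  case (Neg \<phi>)
  then show ?case
    by (simp add: max_consistent_Neg)
next
  case (Conj \<phi>1 \<phi>2)
  then show ?case
    by (simp add: max_consistent_Conj)
next
  case (Box \<phi>)
  note s = Box.prems
  have "(\<forall>t. (s, t) \<in> R1 canonical_model \<longrightarrow> sat canonical_model canonical_val t \<phi>)
      \<longleftrightarrow> (\<forall>t. max_consistent t \<and> box_filter s \<subseteq> t \<longrightarrow> \<phi> \<in> t)"
    using Box.IH s by (auto simp: canonical_model_def)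
  also have "\<dots> \<longleftrightarrow> \<phi> \<in> box_filter s"
    using not_in_box_filter_separated[OF s] by blast
  finally have R1: "(\<forall>t. (s, t) \<in> R1 canonical_model \<longrightarrow> sat canonical_model canonical_val t \<phi>)
      \<longleftrightarrow> \<phi> \<in> box_filter s" .
  have "(\<forall>u. (s, u) \<in> R2 canonical_model \<longrightarrow> \<not> sat canonical_model canonical_val u \<phi>)
      \<longleftrightarrow> (\<forall>u. max_consistent u \<and> box_ideal s \<inter> u = {} \<longrightarrow> \<phi> \<notin> u)"
    using Box.IH s by (auto simp: canonical_model_def)
  also have "\<dots> \<longleftrightarrow> \<phi> \<in> box_ideal s"
    using not_in_box_ideal_separated[OF s] by blast
  finally have R2: "(\<forall>u. (s, u) \<in> R2 canonical_model \<longrightarrow> \<not> sat canonical_model canonical_val u \<phi>)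
      \<longleftrightarrow> \<phi> \<in> box_ideal s" .
  show ?case
    using R1 R2 Box_mem_iff[OF s] by simp
qed

theorem strong_completeness:
  fixes \<Gamma> :: "'p fm set"
  assumes "conseq TYPE('p fm set) \<Gamma> \<phi>" shows "derives \<Gamma> \<phi>"
proof (rule ccontr)
  assume "\<not> derives \<Gamma> \<phi>"
  then obtain s where s: "insert (Neg \<phi>) \<Gamma> \<subseteq> s" "max_consistent s"
    using lindenbaum[OF consistent_insert_Neg] by blast
  have "sat canonical_model canonical_val s \<gamma>" if "\<gamma> \<in> \<Gamma>" for \<gamma>
    using that s truth_lemma[OF s(2)] by auto
  moreover have "s \<in> St canonical_model"
    using s(2) by (simp add: canonical_model_def)
  ultimately have "sat canonical_model canonical_val s \<phi>"
    using assms is_model_canonical[OF s(2)] unfolding conseq_def by blast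
  moreover have "\<phi> \<notin> s"
    using s max_consistent_Neg[OF s(2), of \<phi>] by simp
  ultimately show False
    using truth_lemma[OF s(2)] by simp
qed

theorem mainTheorem7:
  fixes \<Gamma> :: "'p fm set" and \<phi> :: "'p fm"
  shows "(derives \<Gamma> \<phi> \<longrightarrow> conseq TYPE('s) \<Gamma> \<phi>)
       \<and> (conseq TYPE('p fm set) \<Gamma> \<phi> \<longrightarrow> derives \<Gamma> \<phi>)"
  using soundness strong_completeness by blast

end
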